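(* Let $K$ be an idempotent, linearly ordered, archimedian, cancellative, commutative semiring. Let $u,q\in K$, $S=u(qX)^*$, let $r\geq1$, $u_1,\dots,u_r,q_1,\dots,q_r\in K$, $T_i=u_i(q_iX)^*$ and $T=\bigoplus_{1\leq i\leq r}T_i$. Then $T=S$ if and only if $T_i\leq S$ for all $1\leq i\leq r$ and $T_j=S$ for some $1\leq j\leq r$.
   Context: Semiring notions: idempotent ($u\oplus u=u$), linearly ordered ($u\leq v\iff u\oplus v=v$ is a total order), archimedian (for all $u,v,\lambda,\mu$: $u\lambda^k\geq v\mu^k$ for all $k\ge0$ implies $v=\mathbb{0}$ or $\lambda\geq\mu$), cancellative ($uv=u'v$ implies $v=\mathbb{0}$ or $u=u'$). For $a\in K$, $(aX)^*=\bigoplus_{k\ge0}a^kX^k\in K[[X]]$; series are added coefficientwise and ordered coefficientwise ($S\leq T$ iff $S\oplus T=T$). *)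

theory Defs
  imports "HOL-Computational_Algebra.Formal_Power_Series"
begin

definition sr_le :: "'a::comm_semiring_1 \<Rightarrow> 'a \<Rightarrow> bool" where
  "sr_le u v \<longleftrightarrow> u + v = v"

definition sr_idempotent :: "'a::comm_semiring_1 itself \<Rightarrow> bool" where
  "sr_idempotent _ \<longleftrightarrow> (\<forall>u::'a. u + u = u)"

definition sr_linear :: "'a::comm_semiring_1 itself \<Rightarrow> bool" where
  "sr_linear _ \<longleftrightarrow> (\<forall>u v::'a. sr_le u v \<or> sr_le v u)"

definition sr_archimedian :: "'a::comm_semiring_1 itself \<Rightarrow> bool" where
  "sr_archimedian _ \<longleftrightarrow> (\<forall>u v l m::'a.
     (\<forall>k::nat. sr_le (v * m ^ k) (u * l ^ k)) \<longrightarrow> v = 0 \<or> sr_le m l)"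

definition sr_cancellative :: "'a::comm_semiring_1 itself \<Rightarrow> bool" where
  "sr_cancellative _ \<longleftrightarrow> (\<forall>u u' v::'a. u * v = u' * v \<longrightarrow> v = 0 \<or> u = u')"

text \<open>(aX)^* = sum over k of a^k X^k.\<close>
definition star_X :: "'a::comm_semiring_1 \<Rightarrow> 'a fps" where
  "star_X a = Abs_fps (\<lambda>k. a ^ k)"

definition fps_sr_le :: "'a::comm_semiring_1 fps \<Rightarrow> 'a fps \<Rightarrow> bool" where
  "fps_sr_le S T \<longleftrightarrow> S + T = T"

end

theory Submission
  imports Defs
begin

(* Write T_i = u_i (q_i X)^* and S = u (q X)^*; the coefficient of X^k in
   T_i is u_i q_i^k.  The order is u <= v iff u + v = v, so in an idempotent semiring
   every summand lies below a finite sum and a finite sum lies below every common upper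
   bound; this gives the direction "<=" and the domination T_i <= S in direction "=>".
   For the existence of T_j = S we use linearity: a finite sum equals one of its
   summands, so every coefficient u q^k is attained by some T_i.  If u = 0 or q = 0 the
   series S is the constant 0 or u and a direct argument applies.
   Otherwise, by the pigeonhole principle one summand T_j attains the coefficients of S
   at two exponents k1 < k2; cancellation gives q_j^(k2-k1) = q^(k2-k1), and in an
   idempotent, linearly ordered, cancellative semiring powers of positive exponent are
   injective, whence q_j = q and u_j = u. *)

abbreviation geom :: "'a::comm_semiring_1 \<Rightarrow> 'a \<Rightarrow> 'a fps" where
  "geom u q \<equiv> fps_const u * star_X q"

lemma star_X_nth [simp]: "fps_nth (star_X q) k = q ^ k"
  by (simp add: star_X_def)

lemma fps_sr_le_eq_sr_le: "fps_sr_le S T \<longleftrightarrow> sr_le S T"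
  by (simp add: fps_sr_le_def sr_le_def)

lemma fps_sr_le_iff_coeffs: "fps_sr_le S T \<longleftrightarrow> (\<forall>k. sr_le (fps_nth S k) (fps_nth T k))"
  by (simp add: fps_sr_le_def sr_le_def fps_eq_iff)

lemma fps_idempotent:
  assumes "sr_idempotent TYPE('a::comm_semiring_1)"
  shows "sr_idempotent TYPE('a fps)"
  using assms by (simp add: sr_idempotent_def fps_eq_iff)

lemma sr_le_antisym: "sr_le x y \<Longrightarrow> sr_le y x \<Longrightarrow> x = y"
  by (metis sr_le_def add.commute)

lemma sr_le_trans [trans]: "sr_le x y \<Longrightarrow> sr_le y z \<Longrightarrow> sr_le x z"
  by (metis sr_le_def add.assoc)

lemma sr_le_mult_right: "sr_le a b \<Longrightarrow> sr_le (a * c) (b * c)"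
  by (metis sr_le_def distrib_right)

lemma sr_le_mult_left: "sr_le a b \<Longrightarrow> sr_le (c * a) (c * b)"
  by (metis sr_le_mult_right mult.commute)

lemma sr_le_zero_iff [simp]: "sr_le x 0 \<longleftrightarrow> x = 0"
  by (simp add: sr_le_def)

lemma sum_sr_le:
  assumes "finite A" and "\<And>i. i \<in> A \<Longrightarrow> sr_le (f i) s"
  shows "sr_le (sum f A) s"
  using assms
proof (induction A rule: finite_induct)
  case empty
  then show ?case by (simp add: sr_le_def)
next
  case (insert x F)
  then show ?case by (simp add: sr_le_def add.assoc)
qed

lemma summand_sr_le_sum:
  assumes idem: "sr_idempotent TYPE('a::comm_semiring_1)"
    and "finite A" and "i \<in> A"
  shows "sr_le (f i :: 'a) (sum f A)"
proof -
  have "f i + f i = f i" using idem by (simp add: sr_idempotent_def)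
  then show ?thesis
    using assms(2,3) by (simp add: sr_le_def sum.remove add.assoc[symmetric])
qed

lemma sum_attained:
  assumes lin: "sr_linear TYPE('a::comm_semiring_1)"
    and "finite A" and "A \<noteq> {}"
  shows "\<exists>i\<in>A. sum f A = (f i :: 'a)"
  using assms(2,3)
proof (induction A rule: finite_ne_induct)
  case (singleton x)
  then show ?case by simp
next
  case (insert x F)
  then obtain i where i: "i \<in> F" "sum f F = f i" by blast
  then have "sum f (insert x F) = f x + f i" using insert by simp
  moreover have "f x + f i = f i \<or> f i + f x = f x"
    using lin by (simp add: sr_linear_def sr_le_def)
  ultimately show ?case using i by (auto simp: add.commute)
qed

lemma sr_le_power:
  assumes idem: "sr_idempotent TYPE('a::comm_semiring_1)" and ab: "sr_le (a::'a) b"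
  shows "sr_le (a ^ n) (b ^ n)"
proof (induction n)
  case 0
  then show ?case using idem by (simp add: sr_idempotent_def sr_le_def)
next
  case (Suc n)
  have "sr_le (a * a ^ n) (b * a ^ n)" using sr_le_mult_right[OF ab] .
  also have "sr_le (b * a ^ n) (b * b ^ n)" using sr_le_mult_left[OF Suc] .
  finally show ?case by simp
qed

lemma cancellative_cancel:
  assumes "sr_cancellative TYPE('a::comm_semiring_1)"
    and "(x::'a) * v = y * v" and "v \<noteq> 0"
  shows "x = y"
  using assms unfolding sr_cancellative_def by blast

lemma cancellative_no_zero_divisors:
  assumes "sr_cancellative TYPE('a::comm_semiring_1)" and "(x::'a) * y = 0"
  shows "x = 0 \<or> y = 0"
  using cancellative_cancel[OF assms(1), of x y 0] assms(2) by auto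

lemma cancellative_power_eq_zero:
  assumes canc: "sr_cancellative TYPE('a::comm_semiring_1)" and "(x::'a) ^ n = 0"
  shows "x = 0"
  using assms(2)
proof (induction n)
  case 0
  then show ?case by (metis mult_1_right mult_zero_right power_0)
next
  case (Suc n)
  then show ?case using cancellative_no_zero_divisors[OF canc] by auto
qed

text \<open>Powers of positive exponent are injective: if a <= b then
  a^(e+1) <= a b^e <= b^(e+1) = a^(e+1), and cancelling b^e from a b^e = b b^e gives a = b.\<close>
lemma power_inj_le:
  assumes idem: "sr_idempotent TYPE('a::comm_semiring_1)"
    and canc: "sr_cancellative TYPE('a)"
    and ab: "sr_le (a::'a) b" and pow: "a ^ Suc e = b ^ Suc e"
  shows "a = b"
proof (cases "b ^ e = 0")
  case True
  then have "b = 0" using cancellative_power_eq_zero[OF canc] by blast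
  then show ?thesis using ab by simp
next
  case False
  have lower: "sr_le (a * a ^ e) (a * b ^ e)"
    using sr_le_mult_left[OF sr_le_power[OF idem ab]] .
  have upper: "sr_le (a * b ^ e) (b * b ^ e)" using sr_le_mult_right[OF ab] .
  have "sr_le (b * b ^ e) (a * b ^ e)" using lower pow by simp
  then have "a * b ^ e = b * b ^ e" using sr_le_antisym[OF upper] by blast
  then show ?thesis using cancellative_cancel[OF canc] False by blast
qed

text \<open>By linearity the elements are comparable, so the previous lemma applies.\<close>
lemma power_inj:
  assumes idem: "sr_idempotent TYPE('a::comm_semiring_1)"
    and lin: "sr_linear TYPE('a)" and canc: "sr_cancellative TYPE('a)"
    and pow: "(a::'a) ^ Suc e = b ^ Suc e"
  shows "a = b"
  using lin power_inj_le[OF idem canc _ pow] power_inj_le[OF idem canc _ pow[symmetric]]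
  by (auto simp: sr_linear_def)

lemma geometric_terms_eq:
  assumes idem: "sr_idempotent TYPE('a::comm_semiring_1)"
    and lin: "sr_linear TYPE('a)" and canc: "sr_cancellative TYPE('a)"
    and "k1 < k2" and nz: "(u::'a) * q ^ k1 \<noteq> 0"
    and eq1: "a * b ^ k1 = u * q ^ k1" and eq2: "a * b ^ k2 = u * q ^ k2"
  shows "a = u \<and> b = q"
proof -
  obtain e where k2: "k2 = k1 + Suc e" using less_imp_Suc_add[OF \<open>k1 < k2\<close>] by auto
  have "a * b ^ k2 = (a * b ^ k1) * b ^ Suc e" "u * q ^ k2 = (u * q ^ k1) * q ^ Suc e"
    unfolding k2 power_add by (simp_all only: mult.assoc)
  then have "b ^ Suc e * (u * q ^ k1) = q ^ Suc e * (u * q ^ k1)"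
    using eq1 eq2 by (simp only: mult.commute)
  then have "b ^ Suc e = q ^ Suc e" using cancellative_cancel[OF canc] nz by blast
  then have b: "b = q" using power_inj[OF idem lin canc] by blast
  have "a * q ^ k1 = u * q ^ k1" using eq1 unfolding b .
  moreover have "q ^ k1 \<noteq> 0" using nz by auto
  ultimately have "a = u" using cancellative_cancel[OF canc] by blast
  then show ?thesis using b by simp
qed

lemma pigeonhole_two_exponents:
  assumes "finite A" and "\<forall>k::nat. \<exists>i\<in>A. P i k"
  shows "\<exists>i\<in>A. \<exists>k1 k2. k1 < k2 \<and> P i k1 \<and> P i k2"
proof -
  obtain i where i: "i \<in> A" and inf: "infinite {k. P i k}"
    using pigeonhole_infinite_rel[of "UNIV :: nat set" A "\<lambda>k i. P i k"] assms by auto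
  obtain k1 where k1: "P i k1" using inf not_finite_existsD by blast
  have "\<not> (\<forall>k\<in>{k. P i k}. k < Suc k1)"
    using inf finite_nat_set_iff_bounded by blast
  then obtain k2 where "k2 \<in> {k. P i k}" "k1 < k2" by auto
  then show ?thesis using i k1 by auto
qed

lemma geom_sum_summand_eq:
  fixes u q :: "'a::comm_semiring_1" and us qs :: "'b \<Rightarrow> 'a"
  assumes idem: "sr_idempotent TYPE('a)"
    and lin: "sr_linear TYPE('a)" and canc: "sr_cancellative TYPE('a)"
    and A: "finite A" "A \<noteq> {}"
    and sum_eq: "(\<Sum>i\<in>A. geom (us i) (qs i)) = geom u q"
    and below: "\<forall>i\<in>A. fps_sr_le (geom (us i) (qs i)) (geom u q)"
  shows "\<exists>j\<in>A. geom (us j) (qs j) = geom u q"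
proof -
  have coeffs: "(\<Sum>i\<in>A. us i * qs i ^ k) = u * q ^ k" for k
    using arg_cong[OF sum_eq, of "\<lambda>F. fps_nth F k"] by (simp add: fps_sum_nth)
  have attained: "\<exists>i\<in>A. us i * qs i ^ k = u * q ^ k" for k
  proof -
    obtain i where i: "i \<in> A" "(\<Sum>i\<in>A. us i * qs i ^ k) = us i * qs i ^ k"
      using sum_attained[OF lin A] by blast
    have "us i * qs i ^ k = u * q ^ k" using i(2) coeffs[of k] by simp
    then show ?thesis using i(1) by blast
  qed
  consider "u = 0" | "u \<noteq> 0" "q = 0" | "u \<noteq> 0" "q \<noteq> 0" by blast
  then show ?thesis
  proof cases
    case 1
    then show ?thesis using below A by (auto simp: fps_sr_le_def)
  next
    case 2
    then obtain j where j: "j \<in> A" "us j = u" using attained[of 0] by auto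
    have "sr_le (fps_nth (geom (us j) (qs j)) 1) (fps_nth (geom u q) 1)"
      using below j(1) unfolding fps_sr_le_iff_coeffs by blast
    then have "sr_le (u * qs j) 0" using j(2) 2 by simp
    then have "qs j = 0" using 2 cancellative_no_zero_divisors[OF canc] by auto
    then show ?thesis using j 2 by (intro bexI[of _ j]) auto
  next
    case 3
    obtain j k1 k2 where j: "j \<in> A" "k1 < k2"
      "us j * qs j ^ k1 = u * q ^ k1" "us j * qs j ^ k2 = u * q ^ k2"
      using pigeonhole_two_exponents[OF A(1), of "\<lambda>i k. us i * qs i ^ k = u * q ^ k"] attained
      by blast
    have "u * q ^ k1 \<noteq> 0"
      using 3 cancellative_no_zero_divisors[OF canc] cancellative_power_eq_zero[OF canc] by blast
    then show ?thesis using geometric_terms_eq[OF idem lin canc j(2) _ j(3,4)] j(1) by auto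
  qed
qed

theorem lemma7:
  fixes u q :: "'a::comm_semiring_1" and us qs :: "nat \<Rightarrow> 'a" and r :: nat
  assumes "sr_idempotent TYPE('a)" and "sr_linear TYPE('a)"
    and "sr_archimedian TYPE('a)" and "sr_cancellative TYPE('a)"
    and "r \<ge> 1"
  shows "(\<Sum>i\<in>{1..r}. fps_const (us i) * star_X (qs i)) = fps_const u * star_X q
     \<longleftrightarrow> (\<forall>i\<in>{1..r}. fps_sr_le (fps_const (us i) * star_X (qs i)) (fps_const u * star_X q))
         \<and> (\<exists>j\<in>{1..r}. fps_const (us j) * star_X (qs j) = fps_const u * star_X q)"
proof -
  have idem: "sr_idempotent TYPE('a fps)" using fps_idempotent[OF assms(1)] .
  have below_sum: "sr_le (geom (us i) (qs i)) (\<Sum>i\<in>{1..r}. geom (us i) (qs i))"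
    if "i \<in> {1..r}" for i
    using summand_sr_le_sum[OF idem _ that] by simp
  show ?thesis
  proof
    assume sum_eq: "(\<Sum>i\<in>{1..r}. geom (us i) (qs i)) = geom u q"
    have below: "\<forall>i\<in>{1..r}. fps_sr_le (geom (us i) (qs i)) (geom u q)"
      using below_sum unfolding sum_eq fps_sr_le_eq_sr_le by blast
    moreover have "\<exists>j\<in>{1..r}. geom (us j) (qs j) = geom u q"
      using geom_sum_summand_eq[OF assms(1,2,4) _ _ sum_eq below] assms(5) by simp
    ultimately show "(\<forall>i\<in>{1..r}. fps_sr_le (geom (us i) (qs i)) (geom u q))
        \<and> (\<exists>j\<in>{1..r}. geom (us j) (qs j) = geom u q)" ..
  next
    assume "(\<forall>i\<in>{1..r}. fps_sr_le (geom (us i) (qs i)) (geom u q))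
        \<and> (\<exists>j\<in>{1..r}. geom (us j) (qs j) = geom u q)"
    then obtain j where below: "\<forall>i\<in>{1..r}. sr_le (geom (us i) (qs i)) (geom u q)"
      and j: "j \<in> {1..r}" "geom (us j) (qs j) = geom u q"
      by (auto simp: fps_sr_le_eq_sr_le)
    have "sr_le (\<Sum>i\<in>{1..r}. geom (us i) (qs i)) (geom u q)"
      using below by (intro sum_sr_le) auto
    moreover have "sr_le (geom u q) (\<Sum>i\<in>{1..r}. geom (us i) (qs i))"
      using below_sum[OF j(1)] unfolding j(2) .
    ultimately show "(\<Sum>i\<in>{1..r}. geom (us i) (qs i)) = geom u q"
      by (rule sr_le_antisym)
  qed
qed

end
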